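(* Let $p$ be an odd prime and let $k$ be an integer with $2\le k\le p-1$. Let $T$ be an orthogonal trade in $B_p$ of index $(1,k)$. Then every symbol that occurs in $T$ occurs in $T$ at least $3$ times.
   Context: All arithmetic is modulo $p$, with elements of $\mathbb{Z}_p$ represented by residues $0,\dots,p-1$. A Latin square of order $p$ is viewed as a set of (row, column, symbol) triples in $\mathbb{Z}_p^3$. For $1\le k\le p-1$, $B_p(k)$ is the Latin square with symbol $ki+j$ in cell $(i,j)$, $i,j\in\mathbb{Z}_p$; $B_p=B_p(1)$. A Latin trade in a Latin square $L$ is a subset $T\subseteq L$ for which there is a partial Latin square $T'$ (a disjoint mate of $T$) such that $T$ and $T'$ occupy the same set of cells, $T\cap T'=\emptyset$, and each row (respectively column) of $T$ contains the same set of symbols as the corresponding row (column) of $T'$; then $(L\setminus T)\cup T'$ is a Latin square. Two Latin squares of order $p$ are orthogonal if superimposing them yields each of the $p^2$ ordered pairs of symbols exactly once. An orthogonal trade of index $(\ell,k)$ is a Latin trade $T\subseteq B_p(\ell)$ having a disjoint mate $T'$ such that $(B_p(\ell)\setminus T)\cup T'$ is orthogonal to $B_p(k)$. *)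

theory Defs
  imports Main "HOL-Computational_Algebra.Primes"
begin

text \<open>Latin squares of order p as sets of (row, column, symbol) triples over {0..<p},
  representing elements of Z_p by residues.\<close>

type_synonym triple = "nat \<times> nat \<times> nat"

definition partial_latin_square :: "nat \<Rightarrow> triple set \<Rightarrow> bool" where
  "partial_latin_square p P \<longleftrightarrow>
     (\<forall>(r,c,s)\<in>P. r < p \<and> c < p \<and> s < p) \<and>
     (\<forall>r c s s'. (r,c,s) \<in> P \<and> (r,c,s') \<in> P \<longrightarrow> s = s') \<and>
     (\<forall>r c c' s. (r,c,s) \<in> P \<and> (r,c',s) \<in> P \<longrightarrow> c = c') \<and>
     (\<forall>r r' c s. (r,c,s) \<in> P \<and> (r',c,s) \<in> P \<longrightarrow> r = r')"

definition latin_square :: "nat \<Rightarrow> triple set \<Rightarrow> bool" where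
  "latin_square p L \<longleftrightarrow> partial_latin_square p L \<and>
     (\<forall>r<p. \<forall>c<p. \<exists>s. (r,c,s) \<in> L)"

definition cells :: "triple set \<Rightarrow> (nat \<times> nat) set" where
  "cells T = {(r,c). \<exists>s. (r,c,s) \<in> T}"

definition row_syms :: "triple set \<Rightarrow> nat \<Rightarrow> nat set" where
  "row_syms T r = {s. \<exists>c. (r,c,s) \<in> T}"

definition col_syms :: "triple set \<Rightarrow> nat \<Rightarrow> nat set" where
  "col_syms T c = {s. \<exists>r. (r,c,s) \<in> T}"

definition disjoint_mate :: "nat \<Rightarrow> triple set \<Rightarrow> triple set \<Rightarrow> bool" where
  "disjoint_mate p T T' \<longleftrightarrow> partial_latin_square p T' \<and>
     cells T' = cells T \<and> T \<inter> T' = {} \<and>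
     (\<forall>r. row_syms T' r = row_syms T r) \<and> (\<forall>c. col_syms T' c = col_syms T c)"

definition latin_trade :: "nat \<Rightarrow> triple set \<Rightarrow> triple set \<Rightarrow> bool" where
  "latin_trade p L T \<longleftrightarrow> T \<subseteq> L \<and> (\<exists>T'. disjoint_mate p T T')"

definition B :: "nat \<Rightarrow> nat \<Rightarrow> triple set" where
  "B p k = {(i, j, (k*i + j) mod p) | i j. i < p \<and> j < p}"

definition orthogonal :: "nat \<Rightarrow> triple set \<Rightarrow> triple set \<Rightarrow> bool" where
  "orthogonal p L1 L2 \<longleftrightarrow> latin_square p L1 \<and> latin_square p L2 \<and>
     (\<forall>a<p. \<forall>b<p. \<exists>!(r,c). r < p \<and> c < p \<and> (r,c,a) \<in> L1 \<and> (r,c,b) \<in> L2)"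

definition orthogonal_trade :: "nat \<Rightarrow> nat \<Rightarrow> nat \<Rightarrow> triple set \<Rightarrow> bool" where
  "orthogonal_trade p l k T \<longleftrightarrow> latin_trade p (B p l) T \<and>
     (\<exists>T'. disjoint_mate p T T' \<and> orthogonal p ((B p l - T) \<union> T') (B p k))"

definition sym_count :: "triple set \<Rightarrow> nat \<Rightarrow> nat" where
  "sym_count T s = card {(r,c). (r,c,s) \<in> T}"

end

theory Submission
  imports Defs "HOL-Number_Theory.Cong"
begin

text \<open>Suppose the symbol s occurs in T only at (r,c) and (r',c'). Since T and its mate T' carry
  the same symbols in every row and column, T' must contain s exactly at (r,c') and (r',c).
  In the superposition of B_p and B_p(k) the pair (s, kr+c) occurs only at (r,c), so after the
  trade it would have to occur at (r,c') or (r',c); but there B_p(k) shows kr+c' and kr'+c,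
  both different from kr+c. Hence the traded square is not orthogonal to B_p(k).\<close>

lemma coprime_less_prime:
  fixes m p :: nat
  assumes "prime p" and "0 < m" and "m < p"
  shows "coprime m p"
proof -
  have "\<not> p dvd m" using assms(2,3) by (auto dest: dvd_imp_le)
  then show ?thesis using assms(1) by (metis prime_imp_coprime coprime_commute)
qed

lemma cong_add_lcancel_less_nat:
  fixes i j j' p :: nat
  assumes "[i + j = i + j'] (mod p)" and "j < p" and "j' < p"
  shows "j = j'"
  using assms by (simp add: cong_add_lcancel_nat cong_less_modulus_unique_nat)

lemma cong_mult_lcancel_less_nat:
  fixes m i i' p :: nat
  assumes "coprime m p" and "[m * i = m * i'] (mod p)" and "i < p" and "i' < p"
  shows "i = i'"
  using assms by (simp add: cong_mult_lcancel_nat cong_less_modulus_unique_nat)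

lemma mem_B: "(i, j, x) \<in> B p k \<longleftrightarrow> i < p \<and> j < p \<and> x = (k * i + j) mod p"
  unfolding B_def by auto

lemma partial_latin_square_B:
  assumes "coprime k p"
  shows "partial_latin_square p (B p k)"
proof -
  have bounds: "r < p \<and> c < p \<and> s < p" if "(r, c, s) \<in> B p k" for r c s
    using that by (auto simp: mem_B)
  have cell: "s = s'" if "(r, c, s) \<in> B p k" and "(r, c, s') \<in> B p k" for r c s s'
    using that by (simp add: mem_B)
  have col: "c = c'" if "(r, c, s) \<in> B p k" and "(r, c', s) \<in> B p k" for r c c' s
    using that cong_add_lcancel_less_nat[of "k * r" c c' p] by (auto simp: mem_B cong_def)
  have row: "r = r'" if "(r, c, s) \<in> B p k" and "(r', c, s) \<in> B p k" for r r' c s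
  proof -
    have "[k * r + c = k * r' + c] (mod p)" and "r < p" and "r' < p"
      using that by (auto simp: mem_B cong_def)
    then show ?thesis using assms by (simp add: cong_add_rcancel_nat cong_mult_lcancel_less_nat)
  qed
  show ?thesis unfolding partial_latin_square_def using bounds cell col row by fast
qed

lemma B_superposition_cell_unique:
  assumes "l \<le> k" and "coprime (k - l) p"
    and "(i, j, x) \<in> B p l" and "(r, c, x) \<in> B p l"
    and "(i, j, y) \<in> B p k" and "(r, c, y) \<in> B p k"
  shows "i = r \<and> j = c"
proof -
  have lt: "i < p" "j < p" "r < p" "c < p" using assms(3,4) by (auto simp: mem_B)
  have "[l * i + j = l * r + c] (mod p)" and "[k * i + j = k * r + c] (mod p)"
    using assms(3-6) by (auto simp: mem_B cong_def)
  then have sum: "[k * i + j + (l * r + c) = k * r + c + (l * i + j)] (mod p)"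
    by (metis cong_add cong_sym)
  obtain d where k: "k = l + d" using assms(1) le_Suc_ex by blast
  have "k * i + j + (l * r + c) = d * i + (l * i + j + l * r + c)"
    and "k * r + c + (l * i + j) = d * r + (l * i + j + l * r + c)"
    by (simp_all add: k algebra_simps)
  with sum have "[d * i = d * r] (mod p)" by (simp add: cong_add_rcancel_nat)
  then have "i = r" using assms(2) k lt cong_mult_lcancel_less_nat[of d p i r] by simp
  with assms(3,4) lt show ?thesis
    using cong_add_lcancel_less_nat[of "l * r" j c p] by (auto simp: mem_B cong_def)
qed

lemma finite_partial_latin_square:
  assumes "partial_latin_square p L"
  shows "finite L"
proof (rule finite_subset)
  show "L \<subseteq> {..<p} \<times> {..<p} \<times> {..<p}"
    using assms unfolding partial_latin_square_def by fast
qed simp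

lemma partial_latin_square_col_eq:
  "\<lbrakk>partial_latin_square p L; (r, c, s) \<in> L; (r, c', s) \<in> L\<rbrakk> \<Longrightarrow> c = c'"
  unfolding partial_latin_square_def by blast

lemma partial_latin_square_row_eq:
  "\<lbrakk>partial_latin_square p L; (r, c, s) \<in> L; (r', c, s) \<in> L\<rbrakk> \<Longrightarrow> r = r'"
  unfolding partial_latin_square_def by blast

lemma disjoint_mate_row_partner:
  assumes "partial_latin_square p L" and "T \<subseteq> L" and "disjoint_mate p T T'"
    and "(a, b, s) \<in> T"
  obtains a' b' where "(a', b', s) \<in> T" and "a' \<noteq> a" and "(a, b', s) \<in> T'"
proof -
  have disj: "T \<inter> T' = {}" and rows: "row_syms T' a = row_syms T a"
    and cols: "col_syms T' b' = col_syms T b'" for b'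
    using assms(3) unfolding disjoint_mate_def by blast+
  have "s \<in> row_syms T' a" using assms(4) rows unfolding row_syms_def by blast
  then obtain b' where b': "(a, b', s) \<in> T'" unfolding row_syms_def by blast
  then have "s \<in> col_syms T b'" using cols unfolding col_syms_def by blast
  then obtain a' where a': "(a', b', s) \<in> T" unfolding col_syms_def by blast
  have "b' \<noteq> b" using assms(4) b' disj by blast
  then have "a' \<noteq> a"
    using assms(2,4) a' partial_latin_square_col_eq[OF assms(1)] by blast
  with a' b' show thesis using that by blast
qed

lemma disjoint_mate_symbol_twice:
  assumes L: "partial_latin_square p L" and "T \<subseteq> L" and mate: "disjoint_mate p T T'"
    and "(r, c, s) \<in> T" and "sym_count T s \<le> 2"
  obtains r' c' where "r' \<noteq> r" and "c' \<noteq> c"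
    and "{(i, j). (i, j, s) \<in> T} = {(r, c), (r', c')}"
    and "{(i, j). (i, j, s) \<in> T'} = {(r, c'), (r', c)}"
proof -
  let ?S = "{(i, j). (i, j, s) \<in> T}"
  obtain r' c' where rc': "(r', c', s) \<in> T" "r' \<noteq> r" "(r, c', s) \<in> T'"
    using disjoint_mate_row_partner[OF assms(1-4)] by blast
  have "finite T" using finite_partial_latin_square[OF L] \<open>T \<subseteq> L\<close> by (rule finite_subset[rotated])
  moreover have "?S \<subseteq> (\<lambda>(i, j, _). (i, j)) ` T" by force
  ultimately have "finite ?S" by (meson finite_imageI finite_subset)
  moreover have "{(r, c), (r', c')} \<subseteq> ?S" using assms(4) rc' by auto
  moreover have "card {(r, c), (r', c')} = 2" using rc'(2) by simp
  ultimately have S: "?S = {(r, c), (r', c')}"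
    using assms(5) unfolding sym_count_def by (metis card_seteq)
  obtain r'' c'' where "(r'', c'', s) \<in> T" "r'' \<noteq> r'" "(r', c'', s) \<in> T'"
    using disjoint_mate_row_partner[OF assms(1-3) rc'(1)] by blast
  with S have "(r', c, s) \<in> T'" by auto
  have "c' \<noteq> c" using \<open>T \<subseteq> L\<close> assms(4) rc'(1,2) partial_latin_square_row_eq[OF L] by blast
  moreover have "{(i, j). (i, j, s) \<in> T'} = {(r, c'), (r', c)}"
  proof
    show "{(r, c'), (r', c)} \<subseteq> {(i, j). (i, j, s) \<in> T'}" using rc'(3) \<open>(r', c, s) \<in> T'\<close> by auto
  next
    have T': "partial_latin_square p T'" and rows: "row_syms T' i = row_syms T i" for i
      using mate unfolding disjoint_mate_def by blast+
    have "(i, j) \<in> {(r, c'), (r', c)}" if ij: "(i, j, s) \<in> T'" for i j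
    proof -
      have "s \<in> row_syms T i" using ij rows unfolding row_syms_def by blast
      with S have "i = r \<or> i = r'" unfolding row_syms_def by blast
      with ij rc'(3) \<open>(r', c, s) \<in> T'\<close> show ?thesis
        using partial_latin_square_col_eq[OF T'] by blast
    qed
    then show "{(i, j). (i, j, s) \<in> T'} \<subseteq> {(r, c'), (r', c)}" by blast
  qed
  ultimately show thesis using that rc'(2) S by blast
qed

lemma orthogonal_obtain_cell:
  assumes "orthogonal p L M" and "a < p" and "b < p"
  obtains i j where "(i, j, a) \<in> L" and "(i, j, b) \<in> M"
  using assms unfolding orthogonal_def by blast

lemma B_trade_symbol_twice_not_orthogonal:
  assumes "1 \<le> k" and "coprime k p" and "coprime (k - 1) p"
    and "T \<subseteq> B p 1" and "(r, c, s) \<in> T" and "r' \<noteq> r" and "c' \<noteq> c"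
    and T'_s: "{(i, j). (i, j, s) \<in> T'} = {(r, c'), (r', c)}"
  shows "\<not> orthogonal p ((B p 1 - T) \<union> T') (B p k)"
proof
  assume orth: "orthogonal p ((B p 1 - T) \<union> T') (B p k)"
  have Bk: "partial_latin_square p (B p k)" using assms(2) by (rule partial_latin_square_B)
  have rcB: "(r, c, s) \<in> B p 1" "(r, c, (k * r + c) mod p) \<in> B p k"
    using assms(4,5) by (auto simp: mem_B)
  then have "s < p" "(k * r + c) mod p < p" by (simp_all add: mem_B)
  then obtain i j where ij: "(i, j, s) \<in> (B p 1 - T) \<union> T'" "(i, j, (k * r + c) mod p) \<in> B p k"
    by (rule orthogonal_obtain_cell[OF orth])
  show False
  proof (cases "(i, j, s) \<in> T'")
    case True
    with T'_s have "(i, j) = (r, c') \<or> (i, j) = (r', c)" by blast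
    with ij(2) rcB(2) assms(6,7) show False
      using partial_latin_square_col_eq[OF Bk] partial_latin_square_row_eq[OF Bk] by blast
  next
    case False
    with ij(1) have "(i, j, s) \<in> B p 1" and "(i, j, s) \<notin> T" by auto
    then have "i = r \<and> j = c"
      using B_superposition_cell_unique[OF assms(1,3) _ rcB(1) ij(2) rcB(2)] by simp
    with \<open>(i, j, s) \<notin> T\<close> assms(5) show False by simp
  qed
qed

theorem lemma3p1:
  fixes p k :: nat and T :: "triple set"
  assumes "prime p" and "odd p" and "2 \<le> k" and "k \<le> p - 1"
    and "orthogonal_trade p 1 k T"
  shows "\<forall>s. (\<exists>r c. (r,c,s) \<in> T) \<longrightarrow> sym_count T s \<ge> 3"
proof (intro allI impI)
  fix s assume "\<exists>r c. (r,c,s) \<in> T"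
  then obtain r c where rc: "(r, c, s) \<in> T" by blast
  obtain T' where mate: "disjoint_mate p T T'" and orth: "orthogonal p ((B p 1 - T) \<union> T') (B p k)"
    using assms(5) unfolding orthogonal_trade_def by blast
  have TB: "T \<subseteq> B p 1" using assms(5) unfolding orthogonal_trade_def latin_trade_def by blast
  have "0 < k" "k < p" "0 < k - 1" "k - 1 < p" using assms(3,4) prime_gt_1_nat[OF assms(1)] by auto
  then have cop: "coprime k p" "coprime (k - 1) p" using coprime_less_prime[OF assms(1)] by auto
  have B1: "partial_latin_square p (B p 1)" by (simp add: partial_latin_square_B)
  show "sym_count T s \<ge> 3"
  proof (rule ccontr)
    assume "\<not> sym_count T s \<ge> 3"
    then have "sym_count T s \<le> 2" by simp
    then obtain r' c' where "r' \<noteq> r" "c' \<noteq> c" "{(i, j). (i, j, s) \<in> T} = {(r, c), (r', c')}"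
      and "{(i, j). (i, j, s) \<in> T'} = {(r, c'), (r', c)}"
      by (rule disjoint_mate_symbol_twice[OF B1 TB mate rc])
    with \<open>0 < k\<close> cop TB rc orth show False
      using B_trade_symbol_twice_not_orthogonal[of k p T r c s r' c' T'] by simp
  qed
qed

end
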